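(* For every modal formula $A$ and label $x$, $\mathsf{labIGL}\vdash x:\Box(\Box A\to A)\to\Box A$; that is, the sequent $\emptyset\Rightarrow x:\Box(\Box A\to A)\to\Box A$ has an $\infty$-proof in $\mathsf{labIK4}$.
   Context: Modal formulas: $A ::= p \mid \bot \mid A\wedge A \mid A \vee A \mid A \to A \mid \Box A \mid \Diamond A$. Labelled sequents $\mathcal R,\Gamma\Rightarrow\Delta$ with $\mathcal R$ a set of relational atoms $xRy$ and $\Gamma,\Delta$ multisets of labelled formulas $x:A$. $\mathsf{labK4}$ rules (premisses / conclusion): id $\mathcal R,x:p\Rightarrow x:p$; $\bot$L $\mathcal R,x:\bot,\Gamma\Rightarrow\Delta$; cut: $\mathcal R,\Gamma\Rightarrow\Delta,x:A$ and $\mathcal R,\Gamma',x:A\Rightarrow\Delta'$ / $\mathcal R,\Gamma,\Gamma'\Rightarrow\Delta,\Delta'$; left/right weakening and contraction; thinning $\mathcal R,\Gamma\Rightarrow\Delta$ / $\mathcal R,\mathcal R',\Gamma\Rightarrow\Delta$; $\to$L: $\mathcal R,\Gamma\Rightarrow\Delta,x:A$ and $\mathcal R,\Gamma',x:B\Rightarrow\Delta'$ / $\mathcal R,\Gamma,\Gamma',x:A\to B\Rightarrow\Delta,\Delta'$; $\to$R: $\mathcal R,\Gamma,x:A\Rightarrow\Delta,x:B$ / $\mathcal R,\Gamma\Rightarrow\Delta,x:A\to B$; $\wedge$L, $\wedge$R, $\vee$L, $\vee$R as in Gentzen's LK on labelled formulas with the same label; $\Diamond$L ($y$ fresh): $\mathcal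 R,xRy,\Gamma,y:A\Rightarrow\Delta$ / $\mathcal R,\Gamma,x:\Diamond A\Rightarrow\Delta$; $\Diamond$R: $\mathcal R,xRy,\Gamma\Rightarrow\Delta,y:A$ / $\mathcal R,xRy,\Gamma\Rightarrow\Delta,x:\Diamond A$; $\Box$R ($y$ fresh): $\mathcal R,xRy,\Gamma\Rightarrow\Delta,y:A$ / $\mathcal R,\Gamma\Rightarrow\Delta,x:\Box A$; $\Box$L: $\mathcal R,xRy,\Gamma,y:A\Rightarrow\Delta$ / $\mathcal R,xRy,\Gamma,x:\Box A\Rightarrow\Delta$; tr: $\mathcal R,xRy,yRz,xRz,\Gamma\Rightarrow\Delta$ / $\mathcal R,xRy,yRz,\Gamma\Rightarrow\Delta$. $\mathsf{labIK4}$ is the restriction to sequents with exactly one labelled formula on the right. A preproof is a possibly infinite tree of rule instances whose leaves are zero-premiss rules; a trace along an infinite branch $(S_i)$ is a sequence of labels $(x_i)_{i\ge k}$ with, for each $i$, $x_i=x_{i+1}$ or $x_iRx_{i+1}$ in the relational context of $S_i$ (progress point); progressing = infinitely many progress points; an $\infty$-proof is a preproof all of whose infinite branches have a progressing trace. $\mathsf{labIGL}$ is the class of $\infty$-proofs of $\mathsf{labIK4}$. *)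

theory Defs
  imports "HOL-Library.Multiset"
begin

datatype 'p fm =
    Atom 'p
  | Bot
  | And "'p fm" "'p fm"
  | Or "'p fm" "'p fm"
  | Imp "'p fm" "'p fm"
  | Box "'p fm"
  | Dia "'p fm"

text \<open>Labels are natural numbers (an infinite supply, so fresh labels exist).
  A labelled formula x:A is the pair (x, A); a relational atom xRy is the pair (x, y).
  A sequent R, Gamma => Delta is a triple (R, Gamma, Delta) with R a set of relational
  atoms and Gamma, Delta multisets of labelled formulas.\<close>

type_synonym 'p lfm = "nat \<times> 'p fm"
type_synonym 'p seq = "(nat \<times> nat) set \<times> 'p lfm multiset \<times> 'p lfm multiset"

definition labels :: "'p seq \<Rightarrow> nat set" where
  "labels S = (case S of (R, \<Gamma>, \<Delta>) \<Rightarrow>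
      fst ` R \<union> snd ` R \<union> fst ` set_mset \<Gamma> \<union> fst ` set_mset \<Delta>)"

inductive k4_rule :: "'p seq list \<Rightarrow> 'p seq \<Rightarrow> bool" where
  ax_id: "k4_rule [] (R, {#(x, Atom p)#}, {#(x, Atom p)#})"
| botL: "k4_rule [] (R, add_mset (x, Bot) \<Gamma>, \<Delta>)"
| cut: "k4_rule [(R, \<Gamma>, add_mset (x, A) \<Delta>), (R, add_mset (x, A) \<Gamma>', \<Delta>')]
                (R, \<Gamma> + \<Gamma>', \<Delta> + \<Delta>')"
| wL: "k4_rule [(R, \<Gamma>, \<Delta>)] (R, add_mset (x, A) \<Gamma>, \<Delta>)"
| wR: "k4_rule [(R, \<Gamma>, \<Delta>)] (R, \<Gamma>, add_mset (x, A) \<Delta>)"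
| cL: "k4_rule [(R, add_mset (x, A) (add_mset (x, A) \<Gamma>), \<Delta>)] (R, add_mset (x, A) \<Gamma>, \<Delta>)"
| cR: "k4_rule [(R, \<Gamma>, add_mset (x, A) (add_mset (x, A) \<Delta>))] (R, \<Gamma>, add_mset (x, A) \<Delta>)"
| thin: "k4_rule [(R, \<Gamma>, \<Delta>)] (R \<union> R', \<Gamma>, \<Delta>)"
| impL: "k4_rule [(R, \<Gamma>, add_mset (x, A) \<Delta>), (R, add_mset (x, B) \<Gamma>', \<Delta>')]
                 (R, add_mset (x, Imp A B) (\<Gamma> + \<Gamma>'), \<Delta> + \<Delta>')"
| impR: "k4_rule [(R, add_mset (x, A) \<Gamma>, add_mset (x, B) \<Delta>)] (R, \<Gamma>, add_mset (x, Imp A B) \<Delta>)"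
| andL1: "k4_rule [(R, add_mset (x, A) \<Gamma>, \<Delta>)] (R, add_mset (x, And A B) \<Gamma>, \<Delta>)"
| andL2: "k4_rule [(R, add_mset (x, B) \<Gamma>, \<Delta>)] (R, add_mset (x, And A B) \<Gamma>, \<Delta>)"
| andR: "k4_rule [(R, \<Gamma>, add_mset (x, A) \<Delta>), (R, \<Gamma>, add_mset (x, B) \<Delta>)]
                 (R, \<Gamma>, add_mset (x, And A B) \<Delta>)"
| orL: "k4_rule [(R, add_mset (x, A) \<Gamma>, \<Delta>), (R, add_mset (x, B) \<Gamma>, \<Delta>)]
                (R, add_mset (x, Or A B) \<Gamma>, \<Delta>)"
| orR1: "k4_rule [(R, \<Gamma>, add_mset (x, A) \<Delta>)] (R, \<Gamma>, add_mset (x, Or A B) \<Delta>)"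
| orR2: "k4_rule [(R, \<Gamma>, add_mset (x, B) \<Delta>)] (R, \<Gamma>, add_mset (x, Or A B) \<Delta>)"
| diaL: "y \<notin> labels (R, add_mset (x, Dia A) \<Gamma>, \<Delta>) \<Longrightarrow>
         k4_rule [(insert (x, y) R, add_mset (y, A) \<Gamma>, \<Delta>)] (R, add_mset (x, Dia A) \<Gamma>, \<Delta>)"
| diaR: "k4_rule [(insert (x, y) R, \<Gamma>, add_mset (y, A) \<Delta>)]
                 (insert (x, y) R, \<Gamma>, add_mset (x, Dia A) \<Delta>)"
| boxR: "y \<notin> labels (R, \<Gamma>, add_mset (x, Box A) \<Delta>) \<Longrightarrow>
         k4_rule [(insert (x, y) R, \<Gamma>, add_mset (y, A) \<Delta>)] (R, \<Gamma>, add_mset (x, Box A) \<Delta>)"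
| boxL: "k4_rule [(insert (x, y) R, add_mset (y, A) \<Gamma>, \<Delta>)]
                 (insert (x, y) R, add_mset (x, Box A) \<Gamma>, \<Delta>)"
| tr: "k4_rule [(insert (x, z) (insert (x, y) (insert (y, z) R)), \<Gamma>, \<Delta>)]
               (insert (x, y) (insert (y, z) R), \<Gamma>, \<Delta>)"

text \<open>labIK4: the restriction to sequents with exactly one labelled formula on the right
  (imposed on the conclusion and on all premisses of the rule instance).\<close>

definition ik4_rule :: "'p seq list \<Rightarrow> 'p seq \<Rightarrow> bool" where
  "ik4_rule ps c \<longleftrightarrow> k4_rule ps c \<and> (\<forall>S \<in> set (c # ps). size (snd (snd S)) = 1)"

text \<open>A (possibly infinite) tree is given by a prefix-closed set N of node addresses
  (lists of child indices, root = []) and a labelling of nodes by sequents.\<close>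

definition ik4_preproof :: "nat list set \<Rightarrow> (nat list \<Rightarrow> 'p seq) \<Rightarrow> bool" where
  "ik4_preproof N lab \<longleftrightarrow>
     [] \<in> N \<and>
     (\<forall>w i. w @ [i] \<in> N \<longrightarrow> w \<in> N) \<and>
     (\<forall>w \<in> N. \<exists>k. (\<forall>i. w @ [i] \<in> N \<longleftrightarrow> i < k) \<and>
                   ik4_rule (map (\<lambda>i. lab (w @ [i])) [0..<k]) (lab w))"

text \<open>An infinite branch is given by a choice of child index c n at each depth n.\<close>

definition infinite_branch :: "nat list set \<Rightarrow> (nat \<Rightarrow> nat) \<Rightarrow> bool" where
  "infinite_branch N c \<longleftrightarrow> (\<forall>n. map c [0..<n] \<in> N)"

definition progressing_trace :: "(nat \<Rightarrow> 'p seq) \<Rightarrow> bool" where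
  "progressing_trace S \<longleftrightarrow>
     (\<exists>k (x :: nat \<Rightarrow> nat).
        (\<forall>i \<ge> k. x i = x (Suc i) \<or> (x i, x (Suc i)) \<in> fst (S i)) \<and>
        (\<forall>m. \<exists>i \<ge> max m k. (x i, x (Suc i)) \<in> fst (S i)))"

definition ik4_inf_proof :: "nat list set \<Rightarrow> (nat list \<Rightarrow> 'p seq) \<Rightarrow> bool" where
  "ik4_inf_proof N lab \<longleftrightarrow>
     ik4_preproof N lab \<and>
     (\<forall>c. infinite_branch N c \<longrightarrow> progressing_trace (\<lambda>n. lab (map c [0..<n])))"

definition labIGL_provable :: "'p seq \<Rightarrow> bool" where
  "labIGL_provable S \<longleftrightarrow> (\<exists>N lab. ik4_inf_proof N lab \<and> lab [] = S)"

end

theory Submission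
  imports Defs
begin

text \<open>
  Loeb's axiom has a cyclic proof. After \<open>\<to>R\<close> and \<open>\<box>R\<close> one reaches
  \<open>xRy, x:\<box>(\<box>A \<to> A) \<Rightarrow> y:A\<close>. Contracting the hypothesis, unboxing it at \<open>y\<close> and
  splitting \<open>y:\<box>A \<to> A\<close> leaves the identity \<open>y:A \<Rightarrow> y:A\<close> and the premiss
  \<open>y:\<box>A\<close>; a fresh \<open>yRz\<close> from \<open>\<box>R\<close>, transitivity and thinning bring us back
  to the starting sequent with \<open>z\<close> in place of \<open>y\<close>. Hence two successor labels suffice and
  alternate. The only infinite branch runs around this loop, and the trace following the current
  successor world progresses at every \<open>yRz\<close>. The \<open>\<infinity>\<close>-proof is the unfolding of this
  finite graph, with finite identity proofs grafted onto its leaves.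
\<close>

section \<open>Unfolding proof graphs\<close>

lemma progressing_trace_shift:
  assumes "progressing_trace (\<lambda>n. S (n + m))"
  shows "progressing_trace S"
proof -
  obtain k x where
    step: "\<forall>i \<ge> k. x i = x (Suc i) \<or> (x i, x (Suc i)) \<in> fst (S (i + m))" and
    prog: "\<forall>j. \<exists>i \<ge> max j k. (x i, x (Suc i)) \<in> fst (S (i + m))"
    using assms unfolding progressing_trace_def by blast
  show ?thesis
    unfolding progressing_trace_def
  proof (rule exI[of _ "k + m"], rule exI[of _ "\<lambda>i. x (i - m)"], intro conjI allI impI)
    fix i assume "k + m \<le> i"
    then show "x (i - m) = x (Suc i - m) \<or> (x (i - m), x (Suc i - m)) \<in> fst (S i)"
      using step[rule_format, of "i - m"] by (simp add: Suc_diff_le)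
  next
    fix j
    obtain i where "i \<ge> max j k" "(x i, x (Suc i)) \<in> fst (S (i + m))"
      using prog by blast
    then show "\<exists>i' \<ge> max j (k + m). (x (i' - m), x (Suc i' - m)) \<in> fst (S i')"
      by (intro exI[of _ "i + m"]) auto
  qed
qed

lemma labIGL_provable_size_succedent:
  "labIGL_provable S \<Longrightarrow> size (snd (snd S)) = 1"
  unfolding labIGL_provable_def ik4_inf_proof_def ik4_preproof_def ik4_rule_def by force

text \<open>Following an address \<open>w\<close> from \<open>s\<close> through the graph \<open>ch\<close>: the result is the state
  reached and, once a leaf has been entered, the rest of \<open>w\<close> as an address inside the proof
  grafted onto that leaf.\<close>

fun locate :: "('s \<Rightarrow> bool) \<Rightarrow> ('s \<Rightarrow> 's list) \<Rightarrow> 's \<Rightarrow> nat list \<Rightarrow> ('s \<times> nat list) option"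
where
  "locate leaf ch s [] = Some (s, [])"
| "locate leaf ch s (i # w) =
     (if leaf s then Some (s, i # w)
      else if i < length (ch s) then locate leaf ch (ch s ! i) w else None)"

lemma locate_snoc:
  "locate leaf ch s (w @ [i]) =
     (case locate leaf ch s w of
        None \<Rightarrow> None
      | Some (t, v) \<Rightarrow>
          if leaf t then Some (t, v @ [i])
          else if i < length (ch t) then Some (ch t ! i, []) else None)"
  by (induction w arbitrary: s) auto

definition graft_nodes ::
    "('s \<Rightarrow> bool) \<Rightarrow> ('s \<Rightarrow> 's list) \<Rightarrow> ('s \<Rightarrow> nat list set) \<Rightarrow> 's \<Rightarrow> nat list set"
where
  "graft_nodes leaf ch Ns s0 =
     {w. case locate leaf ch s0 w of None \<Rightarrow> False | Some (t, v) \<Rightarrow> leaf t \<longrightarrow> v \<in> Ns t}"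

definition graft_label ::
    "('s \<Rightarrow> bool) \<Rightarrow> ('s \<Rightarrow> 's list) \<Rightarrow> ('s \<Rightarrow> 'p seq) \<Rightarrow> ('s \<Rightarrow> nat list \<Rightarrow> 'p seq) \<Rightarrow>
      's \<Rightarrow> nat list \<Rightarrow> 'p seq"
where
  "graft_label leaf ch sq labs s0 w =
     (case locate leaf ch s0 w of
        None \<Rightarrow> undefined
      | Some (t, v) \<Rightarrow> if leaf t then labs t v else sq t)"

context
  fixes leaf :: "'s \<Rightarrow> bool" and ch :: "'s \<Rightarrow> 's list" and sq :: "'s \<Rightarrow> 'p seq"
    and Ns :: "'s \<Rightarrow> nat list set" and labs :: "'s \<Rightarrow> nat list \<Rightarrow> 'p seq"
  assumes node_rule: "\<And>s. \<not> leaf s \<Longrightarrow> ik4_rule (map sq (ch s)) (sq s)"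
    and leaf_proof: "\<And>s. leaf s \<Longrightarrow> ik4_inf_proof (Ns s) (labs s)"
    and leaf_root: "\<And>s. leaf s \<Longrightarrow> labs s [] = sq s"
begin

lemma graft_preproof: "ik4_preproof (graft_nodes leaf ch Ns s0) (graft_label leaf ch sq labs s0)"
  unfolding ik4_preproof_def
proof (intro conjI allI impI ballI)
  show "[] \<in> graft_nodes leaf ch Ns s0"
    using leaf_proof by (simp add: graft_nodes_def ik4_inf_proof_def ik4_preproof_def)
next
  fix w i assume "w @ [i] \<in> graft_nodes leaf ch Ns s0"
  then show "w \<in> graft_nodes leaf ch Ns s0"
    using leaf_proof unfolding graft_nodes_def ik4_inf_proof_def ik4_preproof_def
    by (auto simp: locate_snoc split: option.splits if_splits) blast
next
  fix w assume "w \<in> graft_nodes leaf ch Ns s0"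
  then obtain t v where loc: "locate leaf ch s0 w = Some (t, v)" and v: "leaf t \<Longrightarrow> v \<in> Ns t"
    by (auto simp: graft_nodes_def split: option.splits)
  show "\<exists>k. (\<forall>i. w @ [i] \<in> graft_nodes leaf ch Ns s0 \<longleftrightarrow> i < k) \<and>
      ik4_rule (map (\<lambda>i. graft_label leaf ch sq labs s0 (w @ [i])) [0..<k])
        (graft_label leaf ch sq labs s0 w)"
  proof (cases "leaf t")
    case True
    then obtain k where "\<forall>i. v @ [i] \<in> Ns t \<longleftrightarrow> i < k"
      and "ik4_rule (map (\<lambda>i. labs t (v @ [i])) [0..<k]) (labs t v)"
      using leaf_proof[of t] v unfolding ik4_inf_proof_def ik4_preproof_def by blast
    with True loc show ?thesis
      by (intro exI[of _ k]) (simp add: graft_nodes_def graft_label_def locate_snoc)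
  next
    case False
    have "[] \<in> Ns s" if "leaf s" for s
      using leaf_proof[OF that] by (simp add: ik4_inf_proof_def ik4_preproof_def)
    then have "\<forall>i. w @ [i] \<in> graft_nodes leaf ch Ns s0 \<longleftrightarrow> i < length (ch t)"
      using False loc by (simp add: graft_nodes_def locate_snoc)
    moreover have
      "map (\<lambda>i. graft_label leaf ch sq labs s0 (w @ [i])) [0..<length (ch t)] = map sq (ch t)"
      using False loc leaf_root
      by (intro nth_equalityI) (auto simp: graft_label_def locate_snoc)
    ultimately show ?thesis
      using False loc node_rule[of t] by (intro exI[of _ "length (ch t)"]) (simp add: graft_label_def)
  qed
qed

lemma graft_progressing_into_leaf:
  assumes branch: "infinite_branch (graft_nodes leaf ch Ns s0) c"
    and loc: "locate leaf ch s0 (map c [0..<m]) = Some (t, [])" and "leaf t"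
  shows "progressing_trace (\<lambda>n. graft_label leaf ch sq labs s0 (map c [0..<n]))"
proof -
  have loc_shift: "locate leaf ch s0 (map c [0..<n + m]) = Some (t, map (\<lambda>i. c (i + m)) [0..<n])"
    for n
    by (induction n) (simp_all add: loc locate_snoc \<open>leaf t\<close>)
  have "map (\<lambda>i. c (i + m)) [0..<n] \<in> Ns t" for n
    using branch[unfolded infinite_branch_def, rule_format, of "n + m"] loc_shift[of n] \<open>leaf t\<close>
    by (simp add: graft_nodes_def)
  then have "infinite_branch (Ns t) (\<lambda>i. c (i + m))"
    by (simp add: infinite_branch_def)
  then have "progressing_trace (\<lambda>n. labs t (map (\<lambda>i. c (i + m)) [0..<n]))"
    using leaf_proof[OF \<open>leaf t\<close>] unfolding ik4_inf_proof_def by blast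
  moreover have
    "graft_label leaf ch sq labs s0 (map c [0..<n + m]) = labs t (map (\<lambda>i. c (i + m)) [0..<n])" for n
    using loc_shift[of n] \<open>leaf t\<close> by (simp add: graft_label_def)
  ultimately have "progressing_trace (\<lambda>n. graft_label leaf ch sq labs s0 (map c [0..<n + m]))"
    by simp
  then show ?thesis
    by (rule progressing_trace_shift[of _ m])
qed

lemma graft_progressing:
  assumes progress: "\<And>T. T 0 = s0 \<Longrightarrow> \<forall>n. \<not> leaf (T n) \<and> T (Suc n) \<in> set (ch (T n)) \<Longrightarrow>
      progressing_trace (sq \<circ> T)"
    and branch: "infinite_branch (graft_nodes leaf ch Ns s0) c"
  shows "progressing_trace (\<lambda>n. graft_label leaf ch sq labs s0 (map c [0..<n]))"
proof (cases "\<exists>m t. locate leaf ch s0 (map c [0..<m]) = Some (t, []) \<and> leaf t")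
  case True
  then show ?thesis
    using graft_progressing_into_leaf[OF branch] by blast
next
  case False
  have "\<exists>t. locate leaf ch s0 (map c [0..<n]) = Some (t, []) \<and> \<not> leaf t" for n
  proof (induction n)
    case 0
    show ?case using False[simplified, rule_format, of 0] by simp
  next
    case (Suc n)
    then obtain t where loc: "locate leaf ch s0 (map c [0..<n]) = Some (t, [])" and "\<not> leaf t"
      by blast
    have "map c [0..<Suc n] \<in> graft_nodes leaf ch Ns s0"
      using branch unfolding infinite_branch_def by blast
    then have "c n < length (ch t)"
      using loc \<open>\<not> leaf t\<close> by (simp add: graft_nodes_def locate_snoc split: if_splits)
    then have "locate leaf ch s0 (map c [0..<Suc n]) = Some (ch t ! c n, [])"
      using loc \<open>\<not> leaf t\<close> by (simp add: locate_snoc)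
    with False show ?case
      by blast
  qed
  then obtain T where T: "\<And>n. locate leaf ch s0 (map c [0..<n]) = Some (T n, [])"
    and non_leaf: "\<And>n. \<not> leaf (T n)"
    by metis
  have "T (Suc n) \<in> set (ch (T n))" for n
    using T[of "Suc n"] T[of n] non_leaf[of n]
    by (auto simp: locate_snoc split: if_splits) (metis nth_mem)
  moreover have "T 0 = s0"
    using T[of 0] by simp
  ultimately have "progressing_trace (sq \<circ> T)"
    using progress non_leaf by blast
  then show ?thesis
    using T non_leaf by (simp add: graft_label_def comp_def)
qed

end

theorem labIGL_provable_unfold:
  fixes sq :: "'s \<Rightarrow> 'p seq"
  assumes node_rule: "\<And>s. \<not> leaf s \<Longrightarrow> ik4_rule (map sq (ch s)) (sq s)"
    and leaf: "\<And>s. leaf s \<Longrightarrow> labIGL_provable (sq s)"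
    and progress: "\<And>T. T 0 = s0 \<Longrightarrow> \<forall>n. \<not> leaf (T n) \<and> T (Suc n) \<in> set (ch (T n)) \<Longrightarrow>
      progressing_trace (sq \<circ> T)"
  shows "labIGL_provable (sq s0)"
proof -
  obtain Ns labs where leaf_proof: "\<And>s. leaf s \<Longrightarrow> ik4_inf_proof (Ns s) (labs s)"
    and leaf_root: "\<And>s. leaf s \<Longrightarrow> labs s [] = sq s"
    using leaf unfolding labIGL_provable_def by metis
  have "ik4_inf_proof (graft_nodes leaf ch Ns s0) (graft_label leaf ch sq labs s0)"
    unfolding ik4_inf_proof_def
    using graft_preproof[OF node_rule leaf_proof leaf_root]
      graft_progressing[OF node_rule leaf_proof leaf_root progress]
    by blast
  moreover have "graft_label leaf ch sq labs s0 [] = sq s0"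
    using leaf_root unfolding graft_label_def by simp
  ultimately show ?thesis
    unfolding labIGL_provable_def by blast
qed

section \<open>Finite derivations\<close>

lemma labIGL_provable_rule:
  assumes "ik4_rule ps c" and "\<forall>S \<in> set ps. labIGL_provable S"
  shows "labIGL_provable c"
proof -
  \<comment> \<open>States below \<open>length ps\<close> are the premisses; every other state stands for \<open>c\<close>.\<close>
  define sq where "sq i = (if i < length ps then ps ! i else c)" for i
  have premisses: "map sq [0..<length ps] = ps"
    by (rule nth_equalityI) (simp_all add: sq_def)
  have "labIGL_provable (sq (length ps))"
  proof (rule labIGL_provable_unfold[where leaf = "\<lambda>i. i < length ps" and ch = "\<lambda>_. [0..<length ps]"])
    show "ik4_rule (map sq [0..<length ps]) (sq s)" if "\<not> s < length ps" for s
      unfolding premisses using that assms(1) by (simp add: sq_def)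
    show "labIGL_provable (sq s)" if "s < length ps" for s
      using that assms(2) by (simp add: sq_def)
    show "progressing_trace (sq \<circ> T)"
      if "\<forall>n. \<not> T n < length ps \<and> T (Suc n) \<in> set [0..<length ps]" for T
      using that by auto
  qed
  then show ?thesis
    by (simp add: sq_def)
qed

lemma labIGL_provable_k4_rule:
  assumes "k4_rule ps c" and "size (snd (snd c)) = 1" and "\<forall>S \<in> set ps. labIGL_provable S"
  shows "labIGL_provable c"
  using assms labIGL_provable_size_succedent
  by (intro labIGL_provable_rule[OF _ assms(3)]) (auto simp: ik4_rule_def)

lemma labIGL_provable_thin:
  "labIGL_provable (R, \<Gamma>, \<Delta>) \<Longrightarrow> labIGL_provable (R \<union> R', \<Gamma>, \<Delta>)"
  using labIGL_provable_size_succedent by (intro labIGL_provable_k4_rule[OF k4_rule.thin]) auto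

lemma labIGL_provable_identity: "labIGL_provable (R, {#(y, C)#}, {#(y, C)#})"
proof -
  have "labIGL_provable ({}, {#(y, C)#}, {#(y, C)#})" for y
  proof (induction C arbitrary: y)
    case (Atom p)
    show ?case
      by (rule labIGL_provable_k4_rule[OF k4_rule.ax_id]) auto
  next
    case Bot
    show ?case
      using labIGL_provable_k4_rule[OF k4_rule.botL[of "{}" y "{#}" "{#(y, Bot)#}"]] by simp
  next
    case (And C D)
    have "labIGL_provable ({}, {#(y, And C D)#}, {#(y, C)#})"
      by (rule labIGL_provable_k4_rule[OF k4_rule.andL1]) (use And.IH in auto)
    moreover have "labIGL_provable ({}, {#(y, And C D)#}, {#(y, D)#})"
      by (rule labIGL_provable_k4_rule[OF k4_rule.andL2]) (use And.IH in auto)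
    ultimately show ?case
      by (intro labIGL_provable_k4_rule[OF k4_rule.andR]) auto
  next
    case (Or C D)
    have "labIGL_provable ({}, {#(y, C)#}, {#(y, Or C D)#})"
      by (rule labIGL_provable_k4_rule[OF k4_rule.orR1]) (use Or.IH in auto)
    moreover have "labIGL_provable ({}, {#(y, D)#}, {#(y, Or C D)#})"
      by (rule labIGL_provable_k4_rule[OF k4_rule.orR2]) (use Or.IH in auto)
    ultimately show ?case
      by (intro labIGL_provable_k4_rule[OF k4_rule.orL]) auto
  next
    case (Imp C D)
    have "k4_rule [({}, {#(y, C)#}, {#(y, C)#}), ({}, {#(y, D)#}, {#(y, D)#})]
        ({}, {#(y, C), (y, Imp C D)#}, {#(y, D)#})"
      using k4_rule.impL[of "{}" "{#(y, C)#}" y C "{#}" D "{#}" "{#(y, D)#}"]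
      by (simp add: add_mset_commute)
    then have "labIGL_provable ({}, {#(y, C), (y, Imp C D)#}, {#(y, D)#})"
      by (rule labIGL_provable_k4_rule) (use Imp.IH in auto)
    then show ?case
      by (intro labIGL_provable_k4_rule[OF k4_rule.impR]) auto
  next
    case (Box C)
    have "labIGL_provable ({(y, Suc y)}, {#(Suc y, C)#}, {#(Suc y, C)#})"
      using labIGL_provable_thin[OF Box.IH, of "{(y, Suc y)}"] by simp
    then have "labIGL_provable ({(y, Suc y)}, {#(y, Box C)#}, {#(Suc y, C)#})"
      by (intro labIGL_provable_k4_rule[OF k4_rule.boxL[of y "Suc y" "{}"]]) auto
    then show ?case
      by (intro labIGL_provable_k4_rule[OF k4_rule.boxR[of "Suc y" "{}"]]) (auto simp: labels_def)
  next
    case (Dia C)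
    have "labIGL_provable ({(y, Suc y)}, {#(Suc y, C)#}, {#(Suc y, C)#})"
      using labIGL_provable_thin[OF Dia.IH, of "{(y, Suc y)}"] by simp
    then have "labIGL_provable ({(y, Suc y)}, {#(Suc y, C)#}, {#(y, Dia C)#})"
      by (intro labIGL_provable_k4_rule[OF k4_rule.diaR[of y "Suc y" "{}"]]) auto
    then show ?case
      by (intro labIGL_provable_k4_rule[OF k4_rule.diaL[of "Suc y" "{}"]]) (auto simp: labels_def)
  qed
  from labIGL_provable_thin[OF this, where R' = R] show ?thesis
    by simp
qed

section \<open>Loeb's axiom\<close>

abbreviation loeb_hyp :: "'p fm \<Rightarrow> 'p fm" where
  "loeb_hyp A \<equiv> Box (Imp (Box A) A)"

definition loeb_world :: "nat \<Rightarrow> bool \<Rightarrow> nat" where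
  "loeb_world x p = (if p then Suc x else Suc (Suc x))"

datatype loeb_state =
    Goal | Boxed | World bool | Contracted bool | Unboxed bool | Premiss bool
  | Successor bool | Transitive bool | is_axiom: Axiom bool

fun loeb_seq :: "'p fm \<Rightarrow> nat \<Rightarrow> loeb_state \<Rightarrow> 'p seq" where
  "loeb_seq A x Goal = ({}, {#}, {#(x, Imp (loeb_hyp A) (Box A))#})"
| "loeb_seq A x Boxed = ({}, {#(x, loeb_hyp A)#}, {#(x, Box A)#})"
| "loeb_seq A x (World p) =
     ({(x, loeb_world x p)}, {#(x, loeb_hyp A)#}, {#(loeb_world x p, A)#})"
| "loeb_seq A x (Contracted p) =
     ({(x, loeb_world x p)}, {#(x, loeb_hyp A), (x, loeb_hyp A)#}, {#(loeb_world x p, A)#})"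
| "loeb_seq A x (Unboxed p) =
     ({(x, loeb_world x p)}, {#(loeb_world x p, Imp (Box A) A), (x, loeb_hyp A)#},
      {#(loeb_world x p, A)#})"
| "loeb_seq A x (Premiss p) =
     ({(x, loeb_world x p)}, {#(x, loeb_hyp A)#}, {#(loeb_world x p, Box A)#})"
| "loeb_seq A x (Successor p) =
     ({(x, loeb_world x p), (loeb_world x p, loeb_world x (\<not> p))}, {#(x, loeb_hyp A)#},
      {#(loeb_world x (\<not> p), A)#})"
| "loeb_seq A x (Transitive p) =
     ({(x, loeb_world x (\<not> p)), (x, loeb_world x p), (loeb_world x p, loeb_world x (\<not> p))},
      {#(x, loeb_hyp A)#}, {#(loeb_world x (\<not> p), A)#})"
| "loeb_seq A x (Axiom p) =
     ({(x, loeb_world x p)}, {#(loeb_world x p, A)#}, {#(loeb_world x p, A)#})"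

fun loeb_next :: "loeb_state \<Rightarrow> loeb_state" where
  "loeb_next Goal = Boxed"
| "loeb_next Boxed = World True"
| "loeb_next (World p) = Contracted p"
| "loeb_next (Contracted p) = Unboxed p"
| "loeb_next (Unboxed p) = Premiss p"
| "loeb_next (Premiss p) = Successor p"
| "loeb_next (Successor p) = Transitive p"
| "loeb_next (Transitive p) = World (\<not> p)"
| "loeb_next (Axiom p) = Axiom p"

fun loeb_children :: "loeb_state \<Rightarrow> loeb_state list" where
  "loeb_children (Unboxed p) = [Premiss p, Axiom p]"
| "loeb_children (Axiom p) = []"
| "loeb_children s = [loeb_next s]"

lemma loeb_rule:
  assumes "\<not> is_axiom s"
  shows "ik4_rule (map (loeb_seq A x) (loeb_children s)) (loeb_seq A x s)"
proof (cases s)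
  case Goal
  then show ?thesis
    using k4_rule.impR[of "{}" x "loeb_hyp A" "{#}" "Box A" "{#}"] by (simp add: ik4_rule_def)
next
  case Boxed
  then show ?thesis
    using k4_rule.boxR[of "Suc x" "{}" "{#(x, loeb_hyp A)#}" x A "{#}"]
    by (simp add: ik4_rule_def labels_def loeb_world_def)
next
  case (World p)
  then show ?thesis
    using k4_rule.cL[of "{(x, loeb_world x p)}" x "loeb_hyp A" "{#}" "{#(loeb_world x p, A)#}"]
    by (simp add: ik4_rule_def)
next
  case (Contracted p)
  then show ?thesis
    using k4_rule.boxL[of x "loeb_world x p" "{}" "Imp (Box A) A" "{#(x, loeb_hyp A)#}"
        "{#(loeb_world x p, A)#}"]
    by (simp add: ik4_rule_def)
next
  case (Unboxed p)
  then show ?thesis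
    using k4_rule.impL[of "{(x, loeb_world x p)}" "{#(x, loeb_hyp A)#}" "loeb_world x p" "Box A"
        "{#}" A "{#}" "{#(loeb_world x p, A)#}"]
    by (simp add: ik4_rule_def)
next
  case (Premiss p)
  then show ?thesis
    using k4_rule.boxR[of "loeb_world x (\<not> p)" "{(x, loeb_world x p)}" "{#(x, loeb_hyp A)#}"
        "loeb_world x p" A "{#}"]
    by (auto simp: ik4_rule_def labels_def loeb_world_def insert_commute)
next
  case (Successor p)
  then show ?thesis
    using k4_rule.tr[of x "loeb_world x (\<not> p)" "loeb_world x p" "{}" "{#(x, loeb_hyp A)#}"
        "{#(loeb_world x (\<not> p), A)#}"]
    by (simp add: ik4_rule_def)
next
  case (Transitive p)
  then show ?thesis
    using k4_rule.thin[of "{(x, loeb_world x (\<not> p))}" "{#(x, loeb_hyp A)#}"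
        "{#(loeb_world x (\<not> p), A)#}" "{(x, loeb_world x p), (loeb_world x p, loeb_world x (\<not> p))}"]
    by (simp add: ik4_rule_def insert_commute)
next
  case (Axiom p)
  with assms show ?thesis
    by simp
qed

lemma loeb_axiom_provable: "is_axiom s \<Longrightarrow> labIGL_provable (loeb_seq A x s)"
  by (cases s) (simp_all add: labIGL_provable_identity)

definition loeb_trace_label :: "nat \<Rightarrow> loeb_state \<Rightarrow> nat" where
  "loeb_trace_label x s =
     (case s of Transitive p \<Rightarrow> loeb_world x (\<not> p) | World p \<Rightarrow> loeb_world x p
      | Contracted p \<Rightarrow> loeb_world x p | Unboxed p \<Rightarrow> loeb_world x p | Premiss p \<Rightarrow> loeb_world x p
      | Successor p \<Rightarrow> loeb_world x p | _ \<Rightarrow> Suc x)"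

lemma loeb_trace_label_next:
  "loeb_trace_label x (loeb_next s) = loeb_trace_label x s \<or>
   (loeb_trace_label x s, loeb_trace_label x (loeb_next s)) \<in> fst (loeb_seq A x s)"
  by (cases s) (auto simp: loeb_trace_label_def loeb_world_def)

lemma loeb_next_reaches_successor: "\<not> is_axiom s \<Longrightarrow> \<exists>j p. (loeb_next ^^ j) s = Successor p"
proof (cases s)
  case Goal
  then show ?thesis by (intro exI[of _ 6]) (auto simp: numeral_eq_Suc)
next
  case Boxed
  then show ?thesis by (intro exI[of _ 5]) (auto simp: numeral_eq_Suc)
next
  case (World p)
  then show ?thesis by (intro exI[of _ 4]) (auto simp: numeral_eq_Suc)
next
  case (Contracted p)
  then show ?thesis by (intro exI[of _ 3]) (auto simp: numeral_eq_Suc)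
next
  case (Unboxed p)
  then show ?thesis by (intro exI[of _ 2]) (auto simp: numeral_eq_Suc)
next
  case (Premiss p)
  then show ?thesis by (intro exI[of _ 1]) simp
next
  case (Successor p)
  then show ?thesis by (intro exI[of _ 0]) simp
next
  case (Transitive p)
  then show ?thesis by (intro exI[of _ 5]) (auto simp: numeral_eq_Suc)
qed simp

lemma loeb_path_progressing:
  assumes path: "\<forall>n. \<not> is_axiom (T n) \<and> T (Suc n) \<in> set (loeb_children (T n))"
  shows "progressing_trace (loeb_seq A x \<circ> T)"
proof -
  have step: "T (Suc n) = loeb_next (T n)" for n
    using path[rule_format, of n] path[rule_format, of "Suc n"] by (cases "T n") auto
  have iterate: "T (i + j) = (loeb_next ^^ j) (T i)" for i j
    by (induction j) (simp_all add: step)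
  show ?thesis
    unfolding progressing_trace_def
  proof (rule exI[of _ 0], rule exI[of _ "\<lambda>i. loeb_trace_label x (T i)"], intro conjI allI impI)
    fix i
    show "loeb_trace_label x (T i) = loeb_trace_label x (T (Suc i)) \<or>
        (loeb_trace_label x (T i), loeb_trace_label x (T (Suc i))) \<in> fst ((loeb_seq A x \<circ> T) i)"
      using loeb_trace_label_next[of x "T i" A] by (auto simp: step)
  next
    fix m
    obtain j p where "(loeb_next ^^ j) (T m) = Successor p"
      using loeb_next_reaches_successor path by blast
    then have "T (m + j) = Successor p"
      by (simp add: iterate)
    then show "\<exists>i \<ge> max m 0. (loeb_trace_label x (T i), loeb_trace_label x (T (Suc i)))
        \<in> fst ((loeb_seq A x \<circ> T) i)"
      by (intro exI[of _ "m + j"]) (simp add: step loeb_trace_label_def loeb_world_def)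
  qed
qed

theorem mainTheorem15:
  fixes A :: "'p fm" and x :: nat
  shows "labIGL_provable ({}, {#}, {#(x, Imp (Box (Imp (Box A) A)) (Box A))#})"
proof -
  have "labIGL_provable (loeb_seq A x Goal)"
    by (rule labIGL_provable_unfold[where leaf = is_axiom and ch = loeb_children and sq = "loeb_seq A x"])
      (auto intro: loeb_rule loeb_axiom_provable loeb_path_progressing)
  then show ?thesis
    by simp
qed

end
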